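(* Let $K$ be a finite simplicial complex with positive edge lengths, and let $h\in H_d(K;\mathbb{Z}_2)$ be a homology class. Let $z_r$ be a cycle in $h$ of minimal radius and $z_d$ a cycle in $h$ of minimal diameter. Then $\mathrm{diam}(z_r)\le 2\,\mathrm{diam}(z_d)$.
   Context: For vertices $p,q$ of $K$, $\mathrm{dist}(p,q)$ is the length of a shortest path between them in the 1-skeleton of $K$. For a cycle $z$ with vertex set $\mathrm{Vert}(z)$: $\mathrm{diam}(z)=\max_{p,q\in\mathrm{Vert}(z)}\mathrm{dist}(p,q)$ and $\mathrm{rad}(z)=\min_{p\in\mathrm{Vert}(K)}\max_{q\in\mathrm{Vert}(z)}\mathrm{dist}(p,q)$. Thus $z_r=\arg\min_{z\in h}\mathrm{rad}(z)$ and $z_d=\arg\min_{z\in h}\mathrm{diam}(z)$. *)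

theory Defs
  imports Main "HOL-Library.Extended_Nonnegative_Real"
begin

definition simplicial_complex :: "'a set set \<Rightarrow> bool" where
  "simplicial_complex K \<longleftrightarrow> finite K \<and> (\<forall>\<sigma>\<in>K. \<sigma> \<noteq> {} \<and> finite \<sigma>) \<and>
     (\<forall>\<sigma>\<in>K. \<forall>\<tau>. \<tau> \<subseteq> \<sigma> \<and> \<tau> \<noteq> {} \<longrightarrow> \<tau> \<in> K)"

definition simplices :: "'a set set \<Rightarrow> nat \<Rightarrow> 'a set set" where
  "simplices K d = {\<sigma>\<in>K. card \<sigma> = Suc d}"

text \<open>Z2 d-chains are sets of d-simplices.\<close>
definition chain :: "'a set set \<Rightarrow> nat \<Rightarrow> 'a set set \<Rightarrow> bool" where
  "chain K d c \<longleftrightarrow> c \<subseteq> simplices K d"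

definition boundary :: "nat \<Rightarrow> 'a set set \<Rightarrow> 'a set set" where
  "boundary d c = (if d = 0 then {} else
     {\<tau>. card \<tau> = d \<and> odd (card {\<sigma>\<in>c. \<tau> \<subseteq> \<sigma>})})"

definition cycle :: "'a set set \<Rightarrow> nat \<Rightarrow> 'a set set \<Rightarrow> bool" where
  "cycle K d z \<longleftrightarrow> chain K d z \<and> boundary d z = {}"

definition is_boundary :: "'a set set \<Rightarrow> nat \<Rightarrow> 'a set set \<Rightarrow> bool" where
  "is_boundary K d z \<longleftrightarrow> (\<exists>b. chain K (Suc d) b \<and> boundary (Suc d) b = z)"

definition symdiff :: "'a set \<Rightarrow> 'a set \<Rightarrow> 'a set" where
  "symdiff A B = (A - B) \<union> (B - A)"

text \<open>h is a class of H_d(K;Z2), represented as the set of cycles in it.\<close>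
definition homology_class :: "'a set set \<Rightarrow> nat \<Rightarrow> 'a set set set \<Rightarrow> bool" where
  "homology_class K d h \<longleftrightarrow> (\<exists>z0. cycle K d z0 \<and>
      h = {z. cycle K d z \<and> is_boundary K d (symdiff z z0)})"

definition Vert :: "'a set set \<Rightarrow> 'a set" where
  "Vert z = \<Union> z"

definition walk :: "'a set set \<Rightarrow> 'a \<Rightarrow> 'a \<Rightarrow> 'a list \<Rightarrow> bool" where
  "walk K p q xs \<longleftrightarrow> xs \<noteq> [] \<and> hd xs = p \<and> last xs = q \<and> set xs \<subseteq> \<Union> K \<and>
     (\<forall>i < length xs - 1. xs ! i \<noteq> xs ! Suc i \<and> {xs ! i, xs ! Suc i} \<in> K)"

definition walk_len :: "('a set \<Rightarrow> real) \<Rightarrow> 'a list \<Rightarrow> ennreal" where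
  "walk_len w xs = (\<Sum>i < length xs - 1. ennreal (w {xs ! i, xs ! Suc i}))"

text \<open>Shortest-path distance in the weighted 1-skeleton (\<infinity> if no path).\<close>
definition cdist :: "'a set set \<Rightarrow> ('a set \<Rightarrow> real) \<Rightarrow> 'a \<Rightarrow> 'a \<Rightarrow> ennreal" where
  "cdist K w p q = (INF xs \<in> {xs. walk K p q xs}. walk_len w xs)"

definition diam :: "'a set set \<Rightarrow> ('a set \<Rightarrow> real) \<Rightarrow> 'a set set \<Rightarrow> ennreal" where
  "diam K w z = (SUP p \<in> Vert z. SUP q \<in> Vert z. cdist K w p q)"

definition rad :: "'a set set \<Rightarrow> ('a set \<Rightarrow> real) \<Rightarrow> 'a set set \<Rightarrow> ennreal" where
  "rad K w z = (INF p \<in> \<Union> K. SUP q \<in> Vert z. cdist K w p q)"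

end

theory Submission
  imports Defs
begin

text \<open>The shortest-path distance is a (possibly infinite) pseudometric. In any pseudometric
space a set of radius r has diameter at most 2r, and a nonempty set has radius at most its
diameter, since one may centre it at one of its own points. Hence
diam z_r \<le> 2 rad z_r \<le> 2 rad z_d \<le> 2 diam z_d.\<close>

lemma INF_mono_continuous:
  fixes g :: "'a::{complete_linorder,linorder_topology} \<Rightarrow> 'b::{complete_linorder,linorder_topology}"
  assumes "mono g" "\<And>x. continuous (at x) g" "S \<noteq> {}"
  shows "g (INF x\<in>S. f x) = (INF x\<in>S. g (f x))"
proof -
  have "continuous (at_right (INF x\<in>S. f x)) g"
    using assms(2) continuous_at_split by blast
  then show ?thesis
    using continuous_at_Inf_mono[of g "f ` S"] assms(1,3) by (simp add: image_comp)
qed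

lemma INF_ennreal_add_right: "(INF x\<in>S. f x + c) = (INF x\<in>S. f x) + (c :: ennreal)"
proof (cases "S = {}")
  case False
  have "mono (\<lambda>x::ennreal. x + c)" by (rule monoI) (rule add_right_mono)
  moreover have "continuous (at x) (\<lambda>x::ennreal. x + c)" for x by (intro continuous_intros)
  ultimately show ?thesis by (rule INF_mono_continuous[OF _ _ False, symmetric])
qed simp

lemma INF_ennreal_double: "(INF x\<in>S. 2 * f x) = 2 * (INF x\<in>S. f x :: ennreal)"
proof (cases "S = {}")
  case False
  have "mono (\<lambda>x::ennreal. 2 * x)" by (rule monoI) (rule mult_left_mono, simp_all)
  moreover have "continuous (at x) (\<lambda>x::ennreal. 2 * x)" for x
    unfolding mult_2 by (intro continuous_intros)
  ultimately show ?thesis by (rule INF_mono_continuous[OF _ _ False, symmetric])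
qed (simp add: ennreal_mult_top)

fun edge_path :: "'a set set \<Rightarrow> 'a list \<Rightarrow> bool" where
  "edge_path K (a # b # xs) \<longleftrightarrow> a \<noteq> b \<and> {a, b} \<in> K \<and> edge_path K (b # xs)"
| "edge_path K _ \<longleftrightarrow> True"

lemma edge_path_iff_nth:
  "edge_path K xs \<longleftrightarrow> (\<forall>i < length xs - 1. xs ! i \<noteq> xs ! Suc i \<and> {xs ! i, xs ! Suc i} \<in> K)"
proof (induction K xs rule: edge_path.induct)
  case (1 K a b xs)
  have "(\<forall>i < length (a # b # xs) - 1. P i) \<longleftrightarrow> P 0 \<and> (\<forall>i < length (b # xs) - 1. P (Suc i))" for P
    by (auto simp: less_Suc_eq_0_disj)
  then show ?case using 1 by simp
qed auto

lemma edge_path_append: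
  "edge_path K (xs @ y # ys) \<longleftrightarrow> edge_path K (xs @ [y]) \<and> edge_path K (y # ys)"
  by (induction K xs rule: edge_path.induct) auto

lemma edge_path_rev [simp]: "edge_path K (rev xs) \<longleftrightarrow> edge_path K xs"
proof (induction K xs rule: edge_path.induct)
  case (1 K a b xs)
  have "edge_path K (rev (a # b # xs)) \<longleftrightarrow> edge_path K (rev (b # xs)) \<and> edge_path K [b, a]"
    using edge_path_append[of K "rev xs" b "[a]"] by simp
  then show ?case using 1 by (auto simp: insert_commute)
qed auto

lemma walk_iff_edge_path:
  "walk K p q xs \<longleftrightarrow> xs \<noteq> [] \<and> hd xs = p \<and> last xs = q \<and> set xs \<subseteq> \<Union> K \<and> edge_path K xs"
  by (simp add: walk_def edge_path_iff_nth)

lemma walk_len_Nil [simp]: "walk_len w [] = 0"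
  and walk_len_singleton [simp]: "walk_len w [a] = 0"
  by (simp_all add: walk_len_def)

lemma walk_len_Cons_Cons [simp]:
  "walk_len w (a # b # xs) = ennreal (w {a, b}) + walk_len w (b # xs)"
proof -
  have "walk_len w (a # b # xs) = (\<Sum>i < Suc (length xs). ennreal (w {(a # b # xs) ! i, (a # b # xs) ! Suc i}))"
    by (simp add: walk_len_def)
  then show ?thesis
    by (subst (asm) sum.lessThan_Suc_shift) (simp add: walk_len_def)
qed

lemma walk_len_append:
  "walk_len w (xs @ y # ys) = walk_len w (xs @ [y]) + walk_len w (y # ys)"
  by (induction xs rule: induct_list012) (simp_all add: add.assoc)

lemma walk_len_rev [simp]: "walk_len w (rev xs) = walk_len w xs"
proof (induction xs rule: induct_list012)
  case (3 a b xs)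
  have "walk_len w (rev (a # b # xs)) = walk_len w (rev (b # xs)) + walk_len w [b, a]"
    using walk_len_append[of w "rev xs" b "[a]"] by simp
  then show ?case using 3 by (simp add: insert_commute add.commute)
qed simp_all

lemma walk_rev: "walk K p q xs \<Longrightarrow> walk K q p (rev xs)"
  by (auto simp: walk_iff_edge_path hd_rev last_rev)

lemma walk_join:
  assumes "walk K p q xs" and "walk K q r ys"
  shows "walk K p r (butlast xs @ ys)"
    and "walk_len w (butlast xs @ ys) = walk_len w xs + walk_len w ys"
proof -
  obtain xs' ys' where xs: "xs = xs' @ [q]" and ys: "ys = q # ys'"
    using assms unfolding walk_iff_edge_path by (metis append_butlast_last_id list.collapse)
  show "walk K p r (butlast xs @ ys)"
    using assms edge_path_append[of K xs' q ys'] unfolding walk_iff_edge_path xs ys by (cases xs') auto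
  show "walk_len w (butlast xs @ ys) = walk_len w xs + walk_len w ys"
    using walk_len_append[of w xs' q ys'] by (simp add: xs ys)
qed

lemma INF_ennreal_add_left: "(INF x\<in>S. c + f x) = c + (INF x\<in>S. f x :: ennreal)"
  using INF_ennreal_add_right[of f c S] by (simp add: add.commute)

lemma cdist_le_walk_len: "walk K p q xs \<Longrightarrow> cdist K w p q \<le> walk_len w xs"
  unfolding cdist_def by (rule INF_lower) simp

lemma cdist_commute: "cdist K w p q = cdist K w q p"
proof -
  have "rev ` {xs. walk K p q xs} = {xs. walk K q p xs}"
    by (auto intro!: image_eqI[where x = "rev _"] dest: walk_rev)
  then show ?thesis
    unfolding cdist_def by (metis (no_types, lifting) INF_cong image_comp comp_def walk_len_rev)
qed

lemma cdist_triangle: "cdist K w p r \<le> cdist K w p q + cdist K w q r"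
proof -
  have "cdist K w p r \<le> walk_len w xs + walk_len w ys"
    if "walk K p q xs" and "walk K q r ys" for xs ys
    using cdist_le_walk_len[OF walk_join(1)[OF that]] walk_join(2)[OF that] by simp
  then have "cdist K w p r \<le> (INF xs\<in>{xs. walk K p q xs}. INF ys\<in>{ys. walk K q r ys}. walk_len w xs + walk_len w ys)"
    by (intro INF_greatest) simp
  also have "\<dots> = cdist K w p q + cdist K w q r"
    unfolding cdist_def INF_ennreal_add_left INF_ennreal_add_right ..
  finally show ?thesis .
qed

lemma diam_le_2_rad: "diam K w z \<le> 2 * rad K w z"
proof -
  have "diam K w z \<le> 2 * (SUP q\<in>Vert z. cdist K w p q)" for p
    unfolding diam_def
  proof (intro SUP_least)
    fix q1 q2 assume "q1 \<in> Vert z" "q2 \<in> Vert z"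
    have "cdist K w q1 q2 \<le> cdist K w p q1 + cdist K w p q2"
      using cdist_triangle[of K w q1 q2 p] by (simp add: cdist_commute)
    also have "\<dots> \<le> 2 * (SUP q\<in>Vert z. cdist K w p q)"
      unfolding mult_2 by (intro add_mono SUP_upper) fact+
    finally show "cdist K w q1 q2 \<le> 2 * (SUP q\<in>Vert z. cdist K w p q)" .
  qed
  then show ?thesis
    unfolding rad_def INF_ennreal_double[symmetric] by (intro INF_greatest)
qed

lemma rad_le_diam:
  assumes "Vert z \<subseteq> \<Union> K" and "\<Union> K \<noteq> {}"
  shows "rad K w z \<le> diam K w z"
proof -
  obtain p where p: "p \<in> \<Union> K" "Vert z = {} \<or> p \<in> Vert z"
    using assms by blast
  have "rad K w z \<le> (SUP q\<in>Vert z. cdist K w p q)"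
    unfolding rad_def using p(1) by (rule INF_lower)
  also have "\<dots> \<le> diam K w z"
    using p(2) unfolding diam_def by (auto intro: SUP_upper)
  finally show ?thesis .
qed

lemma homology_class_subset: "homology_class K d h \<Longrightarrow> z \<in> h \<Longrightarrow> z \<subseteq> K"
  by (auto simp: homology_class_def cycle_def chain_def simplices_def)

theorem theorem2p6:
  fixes K :: "'a set set" and w :: "'a set \<Rightarrow> real" and d :: nat
    and h :: "'a set set set" and z_r z_d :: "'a set set"
  assumes "simplicial_complex K"
    and "\<forall>e\<in>K. card e = 2 \<longrightarrow> w e > 0"
    and "homology_class K d h"
    and "z_r \<in> h" and "\<forall>z\<in>h. rad K w z_r \<le> rad K w z"
    and "z_d \<in> h" and "\<forall>z\<in>h. diam K w z_d \<le> diam K w z"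
  shows "diam K w z_r \<le> 2 * diam K w z_d"
proof (cases "Vert z_r = {}")
  case True
  then show ?thesis by (simp add: diam_def)
next
  case False
  have vert_subset: "Vert z \<subseteq> \<Union> K" if "z \<in> h" for z
    using homology_class_subset[OF assms(3) that] by (auto simp: Vert_def)
  with False assms(4) have "\<Union> K \<noteq> {}" by blast
  have "diam K w z_r \<le> 2 * rad K w z_r" by (rule diam_le_2_rad)
  also have "\<dots> \<le> 2 * rad K w z_d" using assms(5,6) by (auto intro: mult_left_mono)
  also have "\<dots> \<le> 2 * diam K w z_d"
    using vert_subset[OF assms(6)] \<open>\<Union> K \<noteq> {}\<close> by (intro mult_left_mono rad_le_diam) auto
  finally show ?thesis .
qed

end
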